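(* Let $\xi_1,\xi_2,\dots$ be i.i.d. integer-valued random variables with $\mathbb E\xi_1<0$, and suppose $\mathbb E e^{\beta\xi_1}=1$ for some $\beta>0$. Let $\xi^{(\beta)}_1,\xi^{(\beta)}_2,\dots$ be i.i.d. with $\mathbb P\{\xi^{(\beta)}_k=j\}=e^{\beta j}\mathbb P\{\xi_1=j\}$, $j\in\mathbb Z$, and $S^{(\beta)}_0=0$, $S^{(\beta)}_n=\sum_{k=1}^n\xi^{(\beta)}_k$. Define $$f(i):=e^{\beta i}\,\mathbb P\Big\{\min_{n\ge0}S^{(\beta)}_n\ge -i\Big\},\qquad i\in\mathbb Z_+.$$ Then $f$ is harmonic for the random walk killed at leaving $\mathbb Z_+$, i.e. $f(i)=\sum_{j=0}^\infty\mathbb P\{\xi_1=j-i\}f(j)$ for all $i\ge0$; moreover $e^{\beta i}-e^{-\beta}\le f(i)\le e^{\beta i}$ for all $i\ge0$; and $f(i)=\mathbb P\{\tau^{(\beta)}_1=\infty\}\sum_{j=0}^ie^{\beta(i-j)}u(j)$, where $u(j)$ is the renewal mass function of the strict descending ladder heights of $S_n=\sum_{k=1}^n\xi_k$ (i.e. $u(l)=\sum_{k\ge0}\mathbb P\{\chi_1+\dots+\chi_k=l,\ \tau_1<\infty,\dots,\tau_k<\infty\}$ with $(\tau_k,\chi_k)$ the strict descending ladder epochs and heights, heights taken positive) and $\tau^{(\beta)}_1$ is the first strict descending ladder epoch of $S^{(\beta)}_n$. *)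

theory Defs
  imports "HOL-Probability.Probability"
begin

definition walk :: "int stream \<Rightarrow> nat \<Rightarrow> int" where
  "walk \<omega> n = sum_list (stake n \<omega>)"

abbreviation iid_law :: "int pmf \<Rightarrow> int stream measure" where
  "iid_law p \<equiv> stream_space (measure_pmf p)"

fun ladder_epoch :: "int stream \<Rightarrow> nat \<Rightarrow> enat" where
  "ladder_epoch \<omega> 0 = 0"
| "ladder_epoch \<omega> (Suc k) =
     (case ladder_epoch \<omega> k of
        \<infinity> \<Rightarrow> \<infinity>
      | enat t \<Rightarrow> (if \<exists>n>t. walk \<omega> n < walk \<omega> t
                   then enat (LEAST n. t < n \<and> walk \<omega> n < walk \<omega> t) else \<infinity>))"

text \<open>Strict descending ladder heights (taken positive): chi_k = S_(tau_(k-1)) - S_(tau_k), k \<ge> 1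
  (only meaningful when tau_k is finite).\<close>
definition ladder_height :: "int stream \<Rightarrow> nat \<Rightarrow> int" where
  "ladder_height \<omega> k =
     walk \<omega> (the_enat (ladder_epoch \<omega> (k - 1))) - walk \<omega> (the_enat (ladder_epoch \<omega> k))"

definition renewal_u :: "int pmf \<Rightarrow> nat \<Rightarrow> ennreal" where
  "renewal_u p l = (\<Sum>k. emeasure (iid_law p)
      {\<omega>. (\<forall>m\<in>{1..k}. ladder_epoch \<omega> m \<noteq> \<infinity>) \<and> (\<Sum>m\<in>{1..k}. ladder_height \<omega> m) = int l})"

text \<open>f(i) = e^(beta i) P{min_(n\<ge>0) S^(beta)_n \<ge> -i}, where q is the law of the tilted step.\<close>
definition harm_f :: "int pmf \<Rightarrow> real \<Rightarrow> nat \<Rightarrow> real" where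
  "harm_f q \<beta> i = exp (\<beta> * real i) *
      measure (iid_law q) {\<omega>. \<forall>n. walk \<omega> n \<ge> - int i}"

end

theory Submission
  imports Defs
begin

(* Write f(i) = e^(beta i) Q(E_i), where Q is the law of the tilted walk and E_i the event that
   it never drops below -i. On events determined by the first t steps, Q has density e^(beta S_t)
   with respect to the law P of the original walk.

   Harmonicity is the first-step decomposition of Q(E_i): the tilt weight e^(beta x) of the first
   step combines with e^(beta i) into the prefactor e^(beta j) of f(j), where j = i + x.

   For the lower bound, split the complement of E_i according to the time t at which the walk first
   drops below -i. There S_t <= -(i+1), so each piece has Q-probability at most e^(-beta (i+1))
   times its P-probability, and these P-probabilities sum to at most 1.

   For the renewal formula, split E_i according to the last strict descending ladder epoch, say the
   k-th one at time t with S_t = -l, l <= i. By the Markov property at time t the Q-probability of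
   such a piece is Q{tau_1 = infinity} times the Q-probability that the k-th ladder epoch is at time
   t with S_t = -l, and the latter is e^(-beta l) times the corresponding P-probability. Summing
   over k and t turns these P-probabilities into u(l). *)

section \<open>Events determined by finitely many steps\<close>

lemma space_iid_law [simp]: "space (iid_law p) = UNIV"
  by (simp add: space_stream_space)

lemma sets_iid_law: "sets (iid_law p) = sets (stream_space (count_space UNIV))"
  by (rule sets_stream_space_cong) simp

lemma prob_space_iid_law: "prob_space (iid_law p)"
  by (rule prob_space.prob_space_stream_space) (rule prob_space_measure_pmf)

lemma emeasure_iid_law_UNIV [simp]: "emeasure (iid_law p) UNIV = 1"
  using prob_space.emeasure_space_1[OF prob_space_iid_law, of p] by simp

lemma measurable_stake_iid_law: "stake n \<in> measurable (iid_law p) (count_space UNIV)"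
  using measurable_stake by (subst measurable_cong_sets[OF sets_iid_law refl])

lemma borel_measurable_stake_iid_law: "(\<lambda>\<omega>. G (stake n \<omega>)) \<in> borel_measurable (iid_law p)"
  by (rule measurable_compose[OF measurable_stake_iid_law]) simp

definition determined_by_prefix :: "nat \<Rightarrow> 'a stream set \<Rightarrow> bool" where
  "determined_by_prefix n A \<longleftrightarrow> (\<forall>\<omega> \<omega>'. stake n \<omega> = stake n \<omega>' \<longrightarrow> \<omega> \<in> A \<longrightarrow> \<omega>' \<in> A)"

lemma determined_by_prefixI:
  "(\<And>\<omega> \<omega>'. stake n \<omega> = stake n \<omega>' \<Longrightarrow> \<omega> \<in> A \<Longrightarrow> \<omega>' \<in> A) \<Longrightarrow> determined_by_prefix n A"
  unfolding determined_by_prefix_def by blast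

lemma determined_by_prefix_iff:
  assumes "determined_by_prefix n A"
  shows "\<omega> \<in> A \<longleftrightarrow> stake n \<omega> \<in> stake n ` A"
proof
  show "\<omega> \<in> A" if "stake n \<omega> \<in> stake n ` A"
  proof -
    from that obtain \<omega>' where "stake n \<omega> = stake n \<omega>'" "\<omega>' \<in> A" by (rule imageE)
    with assms show ?thesis unfolding determined_by_prefix_def by metis
  qed
qed (rule imageI)

lemma indicator_determined_by_prefix:
  "determined_by_prefix n A \<Longrightarrow> indicator A \<omega> = indicator (stake n ` A) (stake n \<omega>)"
  by (simp only: indicator_def determined_by_prefix_iff[of n A \<omega>])

lemma sets_iid_law_determined_by_prefix:
  assumes "determined_by_prefix n A"
  shows "A \<in> sets (iid_law p)"
proof -
  have "A = stake n -` (stake n ` A) \<inter> space (iid_law p)"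
  proof (rule set_eqI)
    show "\<omega> \<in> A \<longleftrightarrow> \<omega> \<in> stake n -` (stake n ` A) \<inter> space (iid_law p)" for \<omega>
      using determined_by_prefix_iff[OF assms, of \<omega>] by simp
  qed
  also have "\<dots> \<in> sets (iid_law p)"
    by (rule measurable_sets[OF measurable_stake_iid_law]) simp
  finally show ?thesis .
qed

lemma nn_integral_iid_law_stake_Suc:
  "(\<integral>\<^sup>+\<omega>. G (stake (Suc n) \<omega>) \<partial>iid_law p)
     = (\<integral>\<^sup>+x. (\<integral>\<^sup>+\<omega>. G (x # stake n \<omega>) \<partial>iid_law p) \<partial>measure_pmf p)"
proof -
  have stake_Scons: "stake (Suc n) (x ## \<omega>) = x # stake n \<omega>" for x \<omega>
    by simp
  show ?thesis
    using prob_space.nn_integral_stream_space[OF prob_space_measure_pmf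
        borel_measurable_stake_iid_law[of G "Suc n" p]]
    by (simp only: stake_Scons)
qed

lemma nn_integral_iid_law_exponential_tilt:
  assumes tilt: "\<And>j. pmf q j = exp (\<beta> * real_of_int j) * pmf p j"
  shows "(\<integral>\<^sup>+\<omega>. G (stake n \<omega>) \<partial>iid_law q) =
         (\<integral>\<^sup>+\<omega>. ennreal (exp (\<beta> * real_of_int (sum_list (stake n \<omega>)))) * G (stake n \<omega>) \<partial>iid_law p)"
proof (induction n arbitrary: G)
  case 0
  then show ?case by simp
next
  case (Suc n)
  let ?w = "\<lambda>xs. ennreal (exp (\<beta> * real_of_int (sum_list xs)))"
  have cons: "ennreal (exp (\<beta> * real_of_int x)) * (\<integral>\<^sup>+\<omega>. ?w (stake n \<omega>) * G (x # stake n \<omega>) \<partial>iid_law p)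
      = (\<integral>\<^sup>+\<omega>. ?w (x # stake n \<omega>) * G (x # stake n \<omega>) \<partial>iid_law p)" for x
    by (subst nn_integral_cmult[symmetric])
       (simp_all add: borel_measurable_stake_iid_law distrib_left exp_add ennreal_mult mult.assoc)
  have "(\<integral>\<^sup>+\<omega>. G (stake (Suc n) \<omega>) \<partial>iid_law q)
     = (\<integral>\<^sup>+x. (\<integral>\<^sup>+\<omega>. G (x # stake n \<omega>) \<partial>iid_law q) \<partial>measure_pmf q)"
    by (rule nn_integral_iid_law_stake_Suc)
  also have "\<dots> = (\<integral>\<^sup>+x. (\<integral>\<^sup>+\<omega>. ?w (stake n \<omega>) * G (x # stake n \<omega>) \<partial>iid_law p) \<partial>measure_pmf q)"
    using Suc.IH[of "\<lambda>xs. G (_ # xs)"] by simp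
  also have "\<dots> = (\<integral>\<^sup>+x. ennreal (exp (\<beta> * real_of_int x))
      * (\<integral>\<^sup>+\<omega>. ?w (stake n \<omega>) * G (x # stake n \<omega>) \<partial>iid_law p) \<partial>measure_pmf p)"
    by (simp add: nn_integral_measure_pmf tilt ennreal_mult mult.assoc mult.left_commute)
  also have "\<dots> = (\<integral>\<^sup>+x. (\<integral>\<^sup>+\<omega>. ?w (x # stake n \<omega>) * G (x # stake n \<omega>) \<partial>iid_law p) \<partial>measure_pmf p)"
    by (simp only: cons)
  also have "\<dots> = (\<integral>\<^sup>+\<omega>. ?w (stake (Suc n) \<omega>) * G (stake (Suc n) \<omega>) \<partial>iid_law p)"
    by (rule nn_integral_iid_law_stake_Suc[symmetric])
  finally show ?case .
qed

lemma nn_integral_iid_law_stake_sdrop: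
  assumes H: "H \<in> borel_measurable (iid_law p)"
  shows "(\<integral>\<^sup>+\<omega>. G (stake n \<omega>) * H (sdrop n \<omega>) \<partial>iid_law p) =
         (\<integral>\<^sup>+\<omega>. G (stake n \<omega>) \<partial>iid_law p) * (\<integral>\<^sup>+\<omega>. H \<omega> \<partial>iid_law p)"
proof (induction n arbitrary: G)
  case 0
  then show ?case
    by (simp add: nn_integral_cmult H mult.commute)
next
  case (Suc n)
  have meas: "(\<lambda>\<omega>. G (stake (Suc n) \<omega>) * H (sdrop (Suc n) \<omega>)) \<in> borel_measurable (iid_law p)"
    by (intro borel_measurable_times_ennreal borel_measurable_stake_iid_law
        measurable_compose[OF measurable_sdrop H])
  have "(\<integral>\<^sup>+\<omega>. G (stake (Suc n) \<omega>) * H (sdrop (Suc n) \<omega>) \<partial>iid_law p)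
      = (\<integral>\<^sup>+x. (\<integral>\<^sup>+\<omega>. G (x # stake n \<omega>) * H (sdrop n \<omega>) \<partial>iid_law p) \<partial>measure_pmf p)"
    using prob_space.nn_integral_stream_space[OF prob_space_measure_pmf meas] by simp
  also have "\<dots> = (\<integral>\<^sup>+x. (\<integral>\<^sup>+\<omega>. G (x # stake n \<omega>) \<partial>iid_law p) * (\<integral>\<^sup>+\<omega>. H \<omega> \<partial>iid_law p) \<partial>measure_pmf p)"
    using Suc.IH[of "\<lambda>xs. G (_ # xs)"] by simp
  also have "\<dots> = (\<integral>\<^sup>+x. (\<integral>\<^sup>+\<omega>. G (x # stake n \<omega>) \<partial>iid_law p) \<partial>measure_pmf p) * (\<integral>\<^sup>+\<omega>. H \<omega> \<partial>iid_law p)"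
    by (rule nn_integral_multc) simp
  also have "\<dots> = (\<integral>\<^sup>+\<omega>. G (stake (Suc n) \<omega>) \<partial>iid_law p) * (\<integral>\<^sup>+\<omega>. H \<omega> \<partial>iid_law p)"
    by (simp only: nn_integral_iid_law_stake_Suc)
  finally show ?case .
qed

lemma emeasure_iid_law_exponential_tilt:
  assumes tilt: "\<And>j. pmf q j = exp (\<beta> * real_of_int j) * pmf p j"
    and A: "determined_by_prefix n A"
  shows "emeasure (iid_law q) A
       = (\<integral>\<^sup>+\<omega>. ennreal (exp (\<beta> * real_of_int (walk \<omega> n))) * indicator A \<omega> \<partial>iid_law p)"
proof -
  have "emeasure (iid_law q) A = (\<integral>\<^sup>+\<omega>. indicator (stake n ` A) (stake n \<omega>) \<partial>iid_law q)"
    by (simp add: sets_iid_law_determined_by_prefix[OF A] flip: indicator_determined_by_prefix[OF A])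
  also have "\<dots> = (\<integral>\<^sup>+\<omega>. ennreal (exp (\<beta> * real_of_int (sum_list (stake n \<omega>))))
                          * indicator (stake n ` A) (stake n \<omega>) \<partial>iid_law p)"
    by (rule nn_integral_iid_law_exponential_tilt[OF tilt])
  also have "\<dots> = (\<integral>\<^sup>+\<omega>. ennreal (exp (\<beta> * real_of_int (walk \<omega> n))) * indicator A \<omega> \<partial>iid_law p)"
    by (simp only: walk_def flip: indicator_determined_by_prefix[OF A])
  finally show ?thesis .
qed

lemma emeasure_iid_law_Int_sdrop:
  assumes A: "determined_by_prefix n A" and B: "B \<in> sets (iid_law p)"
  shows "emeasure (iid_law p) (A \<inter> sdrop n -` B) = emeasure (iid_law p) A * emeasure (iid_law p) B"
proof -
  have AB: "A \<inter> sdrop n -` B \<in> sets (iid_law p)"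
    using sets.Int[OF sets_iid_law_determined_by_prefix[OF A] measurable_sets[OF measurable_sdrop B]]
    by simp
  have "indicator (A \<inter> sdrop n -` B) \<omega> = indicator (stake n ` A) (stake n \<omega>) * (indicator B (sdrop n \<omega>) :: ennreal)"
    for \<omega>
    by (simp only: indicator_determined_by_prefix[OF A, of \<omega>, symmetric]) (simp add: indicator_def)
  then have "emeasure (iid_law p) (A \<inter> sdrop n -` B)
      = (\<integral>\<^sup>+\<omega>. indicator (stake n ` A) (stake n \<omega>) * indicator B (sdrop n \<omega>) \<partial>iid_law p)"
    by (simp add: AB flip: nn_integral_indicator)
  also have "\<dots> = (\<integral>\<^sup>+\<omega>. indicator (stake n ` A) (stake n \<omega>) \<partial>iid_law p) * (\<integral>\<^sup>+\<omega>. indicator B \<omega> \<partial>iid_law p)"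
    by (rule nn_integral_iid_law_stake_sdrop[OF borel_measurable_indicator[OF B]])
  also have "\<dots> = emeasure (iid_law p) A * emeasure (iid_law p) B"
    by (simp add: B sets_iid_law_determined_by_prefix[OF A] flip: indicator_determined_by_prefix[OF A])
  finally show ?thesis .
qed

lemma walk_0 [simp]: "walk \<omega> 0 = 0"
  by (simp add: walk_def)

lemma walk_Scons_Suc: "walk (x ## \<omega>) (Suc n) = x + walk \<omega> n"
  by (simp add: walk_def)

lemma walk_add: "walk \<omega> (t + m) = walk \<omega> t + walk (sdrop t \<omega>) m"
  by (simp only: walk_def stake_add[symmetric] sum_list_append)

lemma walk_eq_if_stake_eq: "stake t \<omega> = stake t \<omega>' \<Longrightarrow> m \<le> t \<Longrightarrow> walk \<omega> m = walk \<omega>' m"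
  by (metis walk_def take_stake min.absorb1)

lemma sets_iid_law_walk: "{\<omega>. P (walk \<omega> n)} \<in> sets (iid_law p)"
  by (rule sets_iid_law_determined_by_prefix[of n]) (auto simp: determined_by_prefix_def walk_def)

section \<open>Strict descending ladder epochs\<close>

lemma ladder_epoch_Suc_eq_infinity:
  assumes "ladder_epoch \<omega> k = enat s"
  shows "ladder_epoch \<omega> (Suc k) = \<infinity> \<longleftrightarrow> (\<forall>n>s. walk \<omega> s \<le> walk \<omega> n)"
  using assms by simp (meson not_le)

lemma ladder_epoch_Suc_eq_enat:
  "ladder_epoch \<omega> (Suc k) = enat t \<longleftrightarrow>
   (\<exists>s. ladder_epoch \<omega> k = enat s \<and> s < t \<and> walk \<omega> t < walk \<omega> s
        \<and> (\<forall>n. s < n \<and> n < t \<longrightarrow> walk \<omega> s \<le> walk \<omega> n))"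
proof (cases "ladder_epoch \<omega> k")
  case (enat s)
  show ?thesis
  proof (cases "\<exists>n>s. walk \<omega> n < walk \<omega> s")
    case True
    let ?L = "LEAST n. s < n \<and> walk \<omega> n < walk \<omega> s"
    have L: "s < ?L" "walk \<omega> ?L < walk \<omega> s"
      using LeastI_ex[OF True] by simp_all
    have before_L: "\<not> (s < n \<and> walk \<omega> n < walk \<omega> s)" if "n < ?L" for n
      using that by (rule not_less_Least)
    have "t = ?L \<longleftrightarrow> s < t \<and> walk \<omega> t < walk \<omega> s \<and> (\<forall>n. s < n \<and> n < t \<longrightarrow> walk \<omega> s \<le> walk \<omega> n)"
    proof
      assume "s < t \<and> walk \<omega> t < walk \<omega> s \<and> (\<forall>n. s < n \<and> n < t \<longrightarrow> walk \<omega> s \<le> walk \<omega> n)"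
      then show "t = ?L"
        by (intro Least_equality[symmetric]) (auto simp: not_less[symmetric])
    qed (use L before_L in force)
    then show ?thesis using enat True by auto
  next
    case False
    then show ?thesis using enat by auto
  qed
qed simp

declare ladder_epoch.simps(2) [simp del]

lemma ladder_epoch_infinity_mono:
  assumes "ladder_epoch \<omega> k = \<infinity>" "k \<le> m"
  shows "ladder_epoch \<omega> m = \<infinity>"
  using assms(2) by (induction m rule: dec_induct) (auto simp: assms(1) ladder_epoch.simps(2))

lemma walk_ladder_epoch_le: "ladder_epoch \<omega> k = enat t \<Longrightarrow> walk \<omega> t \<le> - int k"
proof (induction k arbitrary: t)
  case 0
  then show ?case by (simp add: zero_enat_def)
next
  case (Suc k)
  then obtain s where "ladder_epoch \<omega> k = enat s" "walk \<omega> t < walk \<omega> s"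
    using ladder_epoch_Suc_eq_enat by blast
  with Suc.IH[of s] show ?case by simp
qed

lemma walk_ladder_epoch_le_walk:
  "ladder_epoch \<omega> k = enat t \<Longrightarrow> n \<le> t \<Longrightarrow> walk \<omega> t \<le> walk \<omega> n"
proof (induction k arbitrary: t)
  case 0
  then show ?case by (simp add: zero_enat_def)
next
  case (Suc k)
  then obtain s where s: "ladder_epoch \<omega> k = enat s" "s < t" "walk \<omega> t < walk \<omega> s"
    "\<forall>n. s < n \<and> n < t \<longrightarrow> walk \<omega> s \<le> walk \<omega> n"
    using ladder_epoch_Suc_eq_enat by blast
  consider "n \<le> s" | "s < n" "n < t" | "n = t"
    using Suc.prems(2) by linarith
  then show ?case
    by cases (use Suc.IH[OF s(1)] s(3,4) in fastforce)+
qed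

lemma ladder_epoch_eq_if_stake_eq:
  assumes "stake t \<omega> = stake t \<omega>'"
  shows "s \<le> t \<Longrightarrow> ladder_epoch \<omega> k = enat s \<Longrightarrow> ladder_epoch \<omega>' k = enat s"
proof (induction k arbitrary: s)
  case 0
  then show ?case by simp
next
  case (Suc k)
  then obtain r where r: "ladder_epoch \<omega> k = enat r" "r < s" "walk \<omega> s < walk \<omega> r"
    "\<forall>n. r < n \<and> n < s \<longrightarrow> walk \<omega> r \<le> walk \<omega> n"
    using ladder_epoch_Suc_eq_enat by blast
  have same_walk: "walk \<omega> n = walk \<omega>' n" if "n \<le> s" for n
    using walk_eq_if_stake_eq[OF assms] that Suc.prems(1) by simp
  show ?case
    unfolding ladder_epoch_Suc_eq_enat
    using Suc.IH[OF _ r(1)] Suc.prems(1) r same_walk by (intro exI[of _ r]) auto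
qed

lemma ladder_epoch_one_eq_infinity: "ladder_epoch \<omega> 1 = \<infinity> \<longleftrightarrow> (\<forall>n>0. 0 \<le> walk \<omega> n)"
  using ladder_epoch_Suc_eq_infinity[of \<omega> 0 0] by (simp add: zero_enat_def)

lemma ladder_epoch_Suc_eq_infinity_sdrop:
  assumes "ladder_epoch \<omega> k = enat t"
  shows "ladder_epoch \<omega> (Suc k) = \<infinity> \<longleftrightarrow> ladder_epoch (sdrop t \<omega>) 1 = \<infinity>"
proof -
  have "(\<forall>n>t. walk \<omega> t \<le> walk \<omega> n) \<longleftrightarrow> (\<forall>m>0. walk \<omega> t \<le> walk \<omega> (t + m))"
    by (metis add_diff_inverse_nat less_imp_le_nat not_less zero_less_diff less_add_same_cancel1)
  also have "\<dots> \<longleftrightarrow> (\<forall>m>0. 0 \<le> walk (sdrop t \<omega>) m)"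
    by (simp add: walk_add)
  finally show ?thesis
    unfolding ladder_epoch_Suc_eq_infinity[OF assms] ladder_epoch_one_eq_infinity .
qed

lemma sum_ladder_height: "(\<Sum>m\<in>{1..k}. ladder_height \<omega> m) = - walk \<omega> (the_enat (ladder_epoch \<omega> k))"
proof (induction k)
  case 0
  then show ?case by (simp add: zero_enat_def)
next
  case (Suc k)
  then show ?case by (simp add: ladder_height_def)
qed

lemma ladder_epochs_finite_iff:
  "(\<forall>m\<in>{1..k}. ladder_epoch \<omega> m \<noteq> \<infinity>) \<longleftrightarrow> ladder_epoch \<omega> k \<noteq> \<infinity>"
proof
  show "ladder_epoch \<omega> k \<noteq> \<infinity>" if "\<forall>m\<in>{1..k}. ladder_epoch \<omega> m \<noteq> \<infinity>"
    using that by (cases k) (auto simp: zero_enat_def)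
  show "\<forall>m\<in>{1..k}. ladder_epoch \<omega> m \<noteq> \<infinity>" if "ladder_epoch \<omega> k \<noteq> \<infinity>"
    using that ladder_epoch_infinity_mono by fastforce
qed

section \<open>Harmonicity\<close>

definition stays_above :: "nat \<Rightarrow> int stream set" where
  "stays_above i = {\<omega>. \<forall>n. walk \<omega> n \<ge> - int i}"

lemma sets_iid_law_stays_above: "stays_above i \<in> sets (iid_law p)"
proof -
  have "stays_above i = (\<Inter>n. {\<omega>. walk \<omega> n \<ge> - int i})"
    by (auto simp: stays_above_def)
  also have "\<dots> \<in> sets (iid_law p)"
    by (intro sets.countable_INT) (auto intro: sets_iid_law_walk)
  finally show ?thesis .
qed

lemma Scons_in_stays_above:
  "x ## \<omega> \<in> stays_above i \<longleftrightarrow> - int i \<le> x \<and> \<omega> \<in> stays_above (nat (x + int i))"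
proof -
  have "x ## \<omega> \<in> stays_above i \<longleftrightarrow> (\<forall>n. - int i \<le> x + walk \<omega> n)"
  proof
    show "\<forall>n. - int i \<le> x + walk \<omega> n" if "x ## \<omega> \<in> stays_above i"
      using that unfolding stays_above_def by (metis (mono_tags) mem_Collect_eq walk_Scons_Suc)
    show "x ## \<omega> \<in> stays_above i" if "\<forall>n. - int i \<le> x + walk \<omega> n"
    proof -
      have "- int i \<le> walk (x ## \<omega>) n" for n
        using that by (cases n) (auto simp: walk_Scons_Suc)
      then show ?thesis by (simp add: stays_above_def)
    qed
  qed
  also have "\<dots> \<longleftrightarrow> - int i \<le> x \<and> (\<forall>n. - int (nat (x + int i)) \<le> walk \<omega> n)"
  proof (cases "- int i \<le> x")
    case True
    then have "- int i \<le> x + walk \<omega> n \<longleftrightarrow> - int (nat (x + int i)) \<le> walk \<omega> n" for n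
      by auto
    with True show ?thesis by simp
  next
    case False
    then show ?thesis by (metis add_0_right walk_0)
  qed
  finally show ?thesis
    by (simp add: stays_above_def)
qed

lemma emeasure_stays_above_first_step:
  "emeasure (iid_law q) (stays_above i) =
   (\<integral>\<^sup>+x. (if - int i \<le> x then emeasure (iid_law q) (stays_above (nat (x + int i))) else 0) \<partial>measure_pmf q)"
proof -
  have "emeasure (iid_law q) (stays_above i)
      = (\<integral>\<^sup>+x. emeasure (iid_law q) {\<omega>. x ## \<omega> \<in> stays_above i} \<partial>measure_pmf q)"
    using prob_space.emeasure_stream_space[OF prob_space_measure_pmf sets_iid_law_stays_above]
    by simp
  also have "\<dots> = (\<integral>\<^sup>+x. (if - int i \<le> x then emeasure (iid_law q) (stays_above (nat (x + int i))) else 0)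
                    \<partial>measure_pmf q)"
    by (rule nn_integral_cong) (simp add: Scons_in_stays_above)
  finally show ?thesis .
qed

lemma nn_integral_measure_pmf_shift_nat:
  fixes h :: "nat \<Rightarrow> ennreal"
  shows "(\<integral>\<^sup>+x. (if - int i \<le> x then h (nat (x + int i)) else 0) \<partial>measure_pmf q)
       = (\<Sum>j. ennreal (pmf q (int j - int i)) * h j)"
proof -
  let ?F = "\<lambda>x. ennreal (pmf q x) * (if - int i \<le> x then h (nat (x + int i)) else 0)"
  let ?B = "{x::int. - int i \<le> x}"
  have "bij_betw (\<lambda>j. int j - int i) UNIV ?B"
    by (rule bij_betwI[where g="\<lambda>x. nat (x + int i)"]) auto
  then have "(\<integral>\<^sup>+x. ?F x \<partial>count_space ?B) = (\<integral>\<^sup>+j. ?F (int j - int i) \<partial>count_space UNIV)"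
    by (rule nn_integral_bij_count_space[symmetric])
  moreover have "(\<integral>\<^sup>+x. ?F x \<partial>count_space UNIV) = (\<integral>\<^sup>+x. ?F x \<partial>count_space ?B)"
    by (subst nn_integral_count_space_indicator) (auto intro!: nn_integral_cong simp: indicator_def)
  ultimately show ?thesis
    by (simp add: nn_integral_measure_pmf nn_integral_count_space_nat)
qed

lemma ennreal_harm_f:
  "ennreal (harm_f q \<beta> i) = ennreal (exp (\<beta> * real i)) * emeasure (iid_law q) (stays_above i)"
proof -
  interpret prob_space "iid_law q"
    by (rule prob_space_iid_law)
  show ?thesis
    by (simp add: harm_f_def stays_above_def emeasure_eq_measure ennreal_mult)
qed

lemma harm_f_nonneg: "0 \<le> harm_f q \<beta> i"
  by (simp add: harm_f_def)

lemma harm_f_harmonic: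
  assumes tilt: "\<And>j. pmf q j = exp (\<beta> * real_of_int j) * pmf p j"
  shows "(\<lambda>j::nat. pmf p (int j - int i) * harm_f q \<beta> j) sums harm_f q \<beta> i"
proof -
  have weight: "ennreal (exp (\<beta> * real i)) * (ennreal (pmf q (int j - int i)) * emeasure (iid_law q) (stays_above j))
      = ennreal (pmf p (int j - int i) * harm_f q \<beta> j)" for j
  proof -
    let ?E = "emeasure (iid_law q) (stays_above j)"
    have exp_weight: "exp (\<beta> * real i) * pmf q (int j - int i) = pmf p (int j - int i) * exp (\<beta> * real j)"
      by (simp add: tilt mult_ac flip: exp_add) (simp add: algebra_simps)
    have "ennreal (exp (\<beta> * real i)) * (ennreal (pmf q (int j - int i)) * ?E)
        = ennreal (exp (\<beta> * real i) * pmf q (int j - int i)) * ?E"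
      by (simp add: ennreal_mult mult.assoc)
    also have "\<dots> = ennreal (pmf p (int j - int i)) * (ennreal (exp (\<beta> * real j)) * ?E)"
      by (simp add: exp_weight ennreal_mult mult.assoc)
    also have "\<dots> = ennreal (pmf p (int j - int i) * harm_f q \<beta> j)"
      by (simp add: ennreal_harm_f ennreal_mult harm_f_nonneg)
    finally show ?thesis .
  qed
  have "ennreal (harm_f q \<beta> i) = ennreal (exp (\<beta> * real i)) *
     (\<Sum>j. ennreal (pmf q (int j - int i)) * emeasure (iid_law q) (stays_above j))"
    by (simp add: ennreal_harm_f emeasure_stays_above_first_step[of q i]
        nn_integral_measure_pmf_shift_nat[where h="\<lambda>j. emeasure (iid_law q) (stays_above j)"])
  also have "\<dots> = (\<Sum>j. ennreal (pmf p (int j - int i) * harm_f q \<beta> j))"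
    by (simp add: weight flip: ennreal_suminf_cmult)
  finally have "(\<lambda>j. ennreal (pmf p (int j - int i) * harm_f q \<beta> j)) sums ennreal (harm_f q \<beta> i)"
    by (simp add: summable_sums[OF summableI])
  then show ?thesis
    by (simp add: sums_ennreal harm_f_nonneg)
qed

section \<open>Upper and lower bounds\<close>

definition first_passage_below :: "nat \<Rightarrow> nat \<Rightarrow> int stream set" where
  "first_passage_below i t = {\<omega>. walk \<omega> t < - int i \<and> (\<forall>m<t. - int i \<le> walk \<omega> m)}"

lemma determined_by_prefix_first_passage_below: "determined_by_prefix t (first_passage_below i t)"
proof (rule determined_by_prefixI)
  fix \<omega> \<omega>' :: "int stream"
  assume "stake t \<omega> = stake t \<omega>'" "\<omega> \<in> first_passage_below i t"
  then show "\<omega>' \<in> first_passage_below i t"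
    using walk_eq_if_stake_eq[of t \<omega> \<omega>'] by (auto simp: first_passage_below_def)
qed

lemma disjoint_family_first_passage_below: "disjoint_family (first_passage_below i)"
  unfolding disjoint_family_on_def first_passage_below_def
  by (auto simp: not_less) (metis linorder_neqE_nat not_less)

lemma UN_first_passage_below: "(\<Union>t. first_passage_below i t) = - stays_above i"
proof (intro set_eqI iffI)
  fix \<omega> assume "\<omega> \<in> - stays_above i"
  then have ex: "\<exists>n. walk \<omega> n < - int i"
    by (auto simp: stays_above_def not_le)
  let ?t = "LEAST n. walk \<omega> n < - int i"
  have "\<omega> \<in> first_passage_below i ?t"
    using LeastI_ex[OF ex] not_less_Least[of _ "\<lambda>n. walk \<omega> n < - int i"]
    by (auto simp: first_passage_below_def not_less)
  then show "\<omega> \<in> (\<Union>t. first_passage_below i t)" by blast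
qed (auto simp: first_passage_below_def stays_above_def not_le)

lemma emeasure_first_passage_below_tilt_le:
  assumes tilt: "\<And>j. pmf q j = exp (\<beta> * real_of_int j) * pmf p j" and "0 \<le> \<beta>"
  shows "emeasure (iid_law q) (first_passage_below i t)
           \<le> ennreal (exp (- \<beta> * (real i + 1))) * emeasure (iid_law p) (first_passage_below i t)"
proof -
  let ?F = "first_passage_below i t"
  have density_le: "ennreal (exp (\<beta> * real_of_int (walk \<omega> t))) * indicator ?F \<omega>
      \<le> ennreal (exp (- \<beta> * (real i + 1))) * indicator ?F \<omega>" for \<omega>
  proof (cases "\<omega> \<in> ?F")
    case True
    then have "real_of_int (walk \<omega> t) \<le> - (real i + 1)"
      by (simp add: first_passage_below_def)
    then have "\<beta> * real_of_int (walk \<omega> t) \<le> \<beta> * - (real i + 1)"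
      using \<open>0 \<le> \<beta>\<close> by (rule mult_left_mono)
    with True show ?thesis by (simp add: algebra_simps)
  qed simp
  have "emeasure (iid_law q) ?F
      = (\<integral>\<^sup>+\<omega>. ennreal (exp (\<beta> * real_of_int (walk \<omega> t))) * indicator ?F \<omega> \<partial>iid_law p)"
    by (rule emeasure_iid_law_exponential_tilt[OF tilt determined_by_prefix_first_passage_below])
  also have "\<dots> \<le> (\<integral>\<^sup>+\<omega>. ennreal (exp (- \<beta> * (real i + 1))) * indicator ?F \<omega> \<partial>iid_law p)"
    by (rule nn_integral_mono) (rule density_le)
  also have "\<dots> = ennreal (exp (- \<beta> * (real i + 1))) * emeasure (iid_law p) ?F"
    by (rule nn_integral_cmult_indicator)
       (rule sets_iid_law_determined_by_prefix[OF determined_by_prefix_first_passage_below])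
  finally show ?thesis .
qed

lemma harm_f_bounds:
  assumes tilt: "\<And>j. pmf q j = exp (\<beta> * real_of_int j) * pmf p j" and "0 \<le> \<beta>"
  shows "exp (\<beta> * real i) - exp (- \<beta>) \<le> harm_f q \<beta> i \<and> harm_f q \<beta> i \<le> exp (\<beta> * real i)"
proof -
  interpret Q: prob_space "iid_law q" by (rule prob_space_iid_law)
  interpret P: prob_space "iid_law p" by (rule prob_space_iid_law)
  let ?c = "exp (- \<beta> * (real i + 1))"
  have sets_fp: "range (first_passage_below i) \<subseteq> sets (iid_law r)" for r
    using sets_iid_law_determined_by_prefix[OF determined_by_prefix_first_passage_below] by blast
  have "emeasure (iid_law q) (- stays_above i) = (\<Sum>t. emeasure (iid_law q) (first_passage_below i t))"
    unfolding UN_first_passage_below[symmetric]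
    by (rule suminf_emeasure[symmetric]) (use sets_fp disjoint_family_first_passage_below in auto)
  also have "\<dots> \<le> (\<Sum>t. ennreal ?c * emeasure (iid_law p) (first_passage_below i t))"
    by (rule suminf_le) (use emeasure_first_passage_below_tilt_le[OF tilt \<open>0 \<le> \<beta>\<close>] in auto)
  also have "\<dots> = ennreal ?c * emeasure (iid_law p) (\<Union>t. first_passage_below i t)"
    by (simp add: suminf_emeasure sets_fp disjoint_family_first_passage_below)
  also have "\<dots> \<le> ennreal ?c"
    using mult_left_mono[OF P.emeasure_le_1] by fastforce
  finally have "Q.prob (- stays_above i) \<le> ?c"
    by (simp add: Q.emeasure_eq_measure)
  moreover have "Q.prob (- stays_above i) = 1 - Q.prob (stays_above i)"
    using Q.prob_compl[OF sets_iid_law_stays_above] by (simp add: Compl_eq_Diff_UNIV)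
  ultimately have lower: "1 - ?c \<le> Q.prob (stays_above i)"
    by linarith
  have harm_f_eq: "harm_f q \<beta> i = exp (\<beta> * real i) * Q.prob (stays_above i)"
    by (simp add: harm_f_def stays_above_def)
  have "exp (\<beta> * real i) - exp (- \<beta>) = exp (\<beta> * real i) * (1 - ?c)"
    by (simp add: algebra_simps flip: exp_add)
  also have "\<dots> \<le> harm_f q \<beta> i"
    unfolding harm_f_eq using lower by (intro mult_left_mono) auto
  finally show ?thesis
    unfolding harm_f_eq by (auto intro: mult_left_le)
qed

section \<open>Renewal representation\<close>

definition ladder_point :: "nat \<Rightarrow> nat \<Rightarrow> nat \<Rightarrow> int stream set" where
  "ladder_point k t l = {\<omega>. ladder_epoch \<omega> k = enat t \<and> walk \<omega> t = - int l}"

definition last_ladder_point :: "nat \<Rightarrow> nat \<Rightarrow> nat \<Rightarrow> int stream set" where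
  "last_ladder_point k t l = ladder_point k t l \<inter> {\<omega>. ladder_epoch \<omega> (Suc k) = \<infinity>}"

lemma determined_by_prefix_ladder_point: "determined_by_prefix t (ladder_point k t l)"
proof (rule determined_by_prefixI)
  fix \<omega> \<omega>' :: "int stream"
  assume "stake t \<omega> = stake t \<omega>'" "\<omega> \<in> ladder_point k t l"
  then show "\<omega>' \<in> ladder_point k t l"
    using ladder_epoch_eq_if_stake_eq walk_eq_if_stake_eq by (auto simp: ladder_point_def)
qed

lemma sets_iid_law_ladder_epoch_one_infinity: "{\<omega>. ladder_epoch \<omega> 1 = \<infinity>} \<in> sets (iid_law p)"
proof -
  have "{\<omega>. ladder_epoch \<omega> 1 = \<infinity>} = (\<Inter>n. {\<omega>. 0 < n \<longrightarrow> 0 \<le> walk \<omega> n})"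
    unfolding ladder_epoch_one_eq_infinity by auto
  also have "\<dots> \<in> sets (iid_law p)"
    by (intro sets.countable_INT) (auto intro: sets_iid_law_walk)
  finally show ?thesis .
qed

lemma last_ladder_point_eq_sdrop:
  "last_ladder_point k t l = ladder_point k t l \<inter> sdrop t -` {\<omega>. ladder_epoch \<omega> 1 = \<infinity>}"
  by (auto simp: last_ladder_point_def ladder_point_def ladder_epoch_Suc_eq_infinity_sdrop)

lemma sets_iid_law_last_ladder_point: "last_ladder_point k t l \<in> sets (iid_law p)"
  using sets.Int[OF sets_iid_law_determined_by_prefix[OF determined_by_prefix_ladder_point]
      measurable_sets[OF measurable_sdrop sets_iid_law_ladder_epoch_one_infinity]]
  by (simp add: last_ladder_point_eq_sdrop)

lemma emeasure_last_ladder_point: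
  assumes tilt: "\<And>j. pmf q j = exp (\<beta> * real_of_int j) * pmf p j"
  shows "emeasure (iid_law q) (last_ladder_point k t l)
       = ennreal (exp (- \<beta> * real l)) * emeasure (iid_law p) (ladder_point k t l)
         * emeasure (iid_law q) {\<omega>. ladder_epoch \<omega> 1 = \<infinity>}"
proof -
  have "emeasure (iid_law q) (ladder_point k t l)
      = (\<integral>\<^sup>+\<omega>. ennreal (exp (\<beta> * real_of_int (walk \<omega> t))) * indicator (ladder_point k t l) \<omega> \<partial>iid_law p)"
    by (rule emeasure_iid_law_exponential_tilt[OF tilt determined_by_prefix_ladder_point])
  also have "\<dots> = (\<integral>\<^sup>+\<omega>. ennreal (exp (- \<beta> * real l)) * indicator (ladder_point k t l) \<omega> \<partial>iid_law p)"
    by (rule nn_integral_cong) (simp add: ladder_point_def indicator_def)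
  also have "\<dots> = ennreal (exp (- \<beta> * real l)) * emeasure (iid_law p) (ladder_point k t l)"
    by (rule nn_integral_cmult_indicator)
       (rule sets_iid_law_determined_by_prefix[OF determined_by_prefix_ladder_point])
  finally have tilted: "emeasure (iid_law q) (ladder_point k t l)
      = ennreal (exp (- \<beta> * real l)) * emeasure (iid_law p) (ladder_point k t l)" .
  show ?thesis
    unfolding last_ladder_point_eq_sdrop tilted
      emeasure_iid_law_Int_sdrop[OF determined_by_prefix_ladder_point sets_iid_law_ladder_epoch_one_infinity]
    ..
qed

lemma last_ladder_point_unique:
  assumes "\<omega> \<in> last_ladder_point k t l" "\<omega> \<in> last_ladder_point k' t' l'"
  shows "k = k' \<and> t = t' \<and> l = l'"
proof -
  have "\<not> k < k'" if "\<omega> \<in> last_ladder_point k t l" "\<omega> \<in> last_ladder_point k' t' l'" for k t l k' t' l'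
    using that ladder_epoch_infinity_mono[of \<omega> "Suc k" k']
    by (auto simp: last_ladder_point_def ladder_point_def)
  then have "k = k'"
    using assms by (meson linorder_neqE_nat)
  then show ?thesis
    using assms by (auto simp: last_ladder_point_def ladder_point_def)
qed

lemma stays_above_eq_UN_last_ladder_point:
  "stays_above i = (\<Union>k. \<Union>t. \<Union>l\<in>{0..i}. last_ladder_point k t l)"
proof (intro set_eqI iffI)
  fix \<omega> assume above: "\<omega> \<in> stays_above i"
  have "ladder_epoch \<omega> (Suc i) = \<infinity>"
  proof (rule ccontr)
    assume "ladder_epoch \<omega> (Suc i) \<noteq> \<infinity>"
    then obtain s where "ladder_epoch \<omega> (Suc i) = enat s"
      by blast
    then have "walk \<omega> s \<le> - int (Suc i)"
      by (rule walk_ladder_epoch_le)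
    moreover have "- int i \<le> walk \<omega> s"
      using above by (simp add: stays_above_def)
    ultimately show False
      by simp
  qed
  moreover have "\<not> ladder_epoch \<omega> 0 = \<infinity>"
    by (simp add: zero_enat_def)
  ultimately obtain k where k: "\<forall>j\<le>k. ladder_epoch \<omega> j \<noteq> \<infinity>" "ladder_epoch \<omega> (Suc k) = \<infinity>"
    using ex_least_nat_less[of "\<lambda>k. ladder_epoch \<omega> k = \<infinity>"] by blast
  obtain t where t: "ladder_epoch \<omega> k = enat t"
    using k(1) by (cases "ladder_epoch \<omega> k") auto
  define l where "l = nat (- walk \<omega> t)"
  have "- int i \<le> walk \<omega> t"
    using above by (simp add: stays_above_def)
  then have "walk \<omega> t = - int l" "l \<le> i"
    using walk_ladder_epoch_le[OF t] by (auto simp: l_def)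
  with k t have "\<omega> \<in> last_ladder_point k t l" "l \<in> {0..i}"
    by (auto simp: last_ladder_point_def ladder_point_def)
  then show "\<omega> \<in> (\<Union>k. \<Union>t. \<Union>l\<in>{0..i}. last_ladder_point k t l)"
    by blast
next
  fix \<omega> assume "\<omega> \<in> (\<Union>k. \<Union>t. \<Union>l\<in>{0..i}. last_ladder_point k t l)"
  then obtain k t l where "l \<le> i" and t: "ladder_epoch \<omega> k = enat t" "walk \<omega> t = - int l"
    and last: "ladder_epoch \<omega> (Suc k) = \<infinity>"
    by (auto simp: last_ladder_point_def ladder_point_def)
  have "walk \<omega> t \<le> walk \<omega> n" for n
    using walk_ladder_epoch_le_walk[OF t(1)] last ladder_epoch_Suc_eq_infinity[OF t(1)]
    by (cases "n \<le> t") auto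
  then have "- int i \<le> walk \<omega> n" for n
    using \<open>l \<le> i\<close> t(2) by (smt (verit) of_nat_le_iff)
  then show "\<omega> \<in> stays_above i"
    by (simp add: stays_above_def)
qed

lemma emeasure_stays_above_eq_suminf:
  "emeasure (iid_law q) (stays_above i)
     = (\<Sum>k. \<Sum>t. \<Sum>l\<in>{0..i}. emeasure (iid_law q) (last_ladder_point k t l))"
proof -
  let ?L = "\<lambda>k t. \<Union>l\<in>{0..i}. last_ladder_point k t l"
  have sets_L: "?L k t \<in> sets (iid_law q)" for k t
    by (auto intro: sets_iid_law_last_ladder_point)
  have "emeasure (iid_law q) (stays_above i) = (\<Sum>k. emeasure (iid_law q) (\<Union>t. ?L k t))"
    unfolding stays_above_eq_UN_last_ladder_point
    by (rule suminf_emeasure[symmetric])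
       (auto simp: disjoint_family_on_def intro: sets_L dest: last_ladder_point_unique)
  also have "\<dots> = (\<Sum>k. \<Sum>t. emeasure (iid_law q) (?L k t))"
    by (intro suminf_cong suminf_emeasure[symmetric])
       (auto simp: disjoint_family_on_def intro: sets_L dest: last_ladder_point_unique)
  also have "\<dots> = (\<Sum>k. \<Sum>t. \<Sum>l\<in>{0..i}. emeasure (iid_law q) (last_ladder_point k t l))"
    by (intro suminf_cong sum_emeasure[symmetric])
       (auto simp: disjoint_family_on_def intro: sets_iid_law_last_ladder_point
        dest: last_ladder_point_unique)
  finally show ?thesis .
qed

lemma renewal_u_eq_suminf_ladder_point:
  "renewal_u p l = (\<Sum>k. \<Sum>t. emeasure (iid_law p) (ladder_point k t l))"
proof -
  have "{\<omega>. (\<forall>m\<in>{1..k}. ladder_epoch \<omega> m \<noteq> \<infinity>) \<and> (\<Sum>m\<in>{1..k}. ladder_height \<omega> m) = int l}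
      = (\<Union>t. ladder_point k t l)" for k
    unfolding ladder_epochs_finite_iff sum_ladder_height
  proof (rule set_eqI)
    show "\<omega> \<in> {\<omega>. ladder_epoch \<omega> k \<noteq> \<infinity> \<and> - walk \<omega> (the_enat (ladder_epoch \<omega> k)) = int l}
        \<longleftrightarrow> \<omega> \<in> (\<Union>t. ladder_point k t l)" for \<omega>
      by (cases "ladder_epoch \<omega> k") (auto simp: ladder_point_def)
  qed
  moreover have "emeasure (iid_law p) (\<Union>t. ladder_point k t l) = (\<Sum>t. emeasure (iid_law p) (ladder_point k t l))"
    for k
  proof (rule suminf_emeasure[symmetric])
    show "range (\<lambda>t. ladder_point k t l) \<subseteq> sets (iid_law p)"
      using sets_iid_law_determined_by_prefix[OF determined_by_prefix_ladder_point] by blast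
    show "disjoint_family (\<lambda>t. ladder_point k t l)"
      by (auto simp: disjoint_family_on_def ladder_point_def)
  qed
  ultimately show ?thesis
    by (simp add: renewal_u_def)
qed

lemma harm_f_renewal:
  assumes tilt: "\<And>j. pmf q j = exp (\<beta> * real_of_int j) * pmf p j"
  shows "ennreal (harm_f q \<beta> i) =
            emeasure (iid_law q) {\<omega>. ladder_epoch \<omega> 1 = \<infinity>}
            * (\<Sum>j\<in>{0..i}. ennreal (exp (\<beta> * (real i - real j))) * renewal_u p j)"
proof -
  let ?D = "emeasure (iid_law q) {\<omega>. ladder_epoch \<omega> 1 = \<infinity>}"
  let ?c = "\<lambda>l. ennreal (exp (- \<beta> * real l))"
  let ?P = "\<lambda>k t l. emeasure (iid_law p) (ladder_point k t l)"
  have "emeasure (iid_law q) (stays_above i) = (\<Sum>k. \<Sum>t. (\<Sum>l\<in>{0..i}. ?c l * ?P k t l) * ?D)"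
    by (simp add: emeasure_stays_above_eq_suminf emeasure_last_ladder_point[OF tilt] sum_distrib_right)
  also have "\<dots> = (\<Sum>k. \<Sum>t. \<Sum>l\<in>{0..i}. ?c l * ?P k t l) * ?D"
    by simp
  also have "(\<Sum>k. \<Sum>t. \<Sum>l\<in>{0..i}. ?c l * ?P k t l) = (\<Sum>l\<in>{0..i}. ?c l * (\<Sum>k. \<Sum>t. ?P k t l))"
    by (simp add: suminf_sum[OF summableI] flip: ennreal_suminf_cmult)
  also have "\<dots> = (\<Sum>l\<in>{0..i}. ?c l * renewal_u p l)"
    by (simp add: renewal_u_eq_suminf_ladder_point)
  finally have "ennreal (harm_f q \<beta> i)
      = ?D * (\<Sum>l\<in>{0..i}. ennreal (exp (\<beta> * real i)) * ?c l * renewal_u p l)"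
    by (simp add: ennreal_harm_f sum_distrib_left mult_ac)
  moreover have "ennreal (exp (\<beta> * real i)) * ?c l = ennreal (exp (\<beta> * (real i - real l)))" for l
    by (simp add: algebra_simps flip: ennreal_mult exp_add)
  ultimately show ?thesis
    by (simp only:)
qed

theorem mainTheorem9:
  fixes p q :: "int pmf" and \<beta> :: real
  assumes neg_mean: "(\<integral>\<^sup>+ x. ennreal (real_of_int x) \<partial>measure_pmf p)
                     < (\<integral>\<^sup>+ x. ennreal (- real_of_int x) \<partial>measure_pmf p)"
    and beta_pos: "\<beta> > 0"
    and cramer: "(\<integral>\<^sup>+ x. ennreal (exp (\<beta> * real_of_int x)) \<partial>measure_pmf p) = 1"
    and tilt: "\<And>j. pmf q j = exp (\<beta> * real_of_int j) * pmf p j"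
  shows "(\<forall>i::nat. (\<lambda>j::nat. pmf p (int j - int i) * harm_f q \<beta> j) sums harm_f q \<beta> i)
       \<and> (\<forall>i::nat. exp (\<beta> * real i) - exp (- \<beta>) \<le> harm_f q \<beta> i
                   \<and> harm_f q \<beta> i \<le> exp (\<beta> * real i))
       \<and> (\<forall>i::nat. ennreal (harm_f q \<beta> i) =
            emeasure (iid_law q) {\<omega>. ladder_epoch \<omega> 1 = \<infinity>}
            * (\<Sum>j\<in>{0..i}. ennreal (exp (\<beta> * (real i - real j))) * renewal_u p j))"
proof -
  have "0 \<le> \<beta>"
    using beta_pos by simp
  then show ?thesis
    using harm_f_harmonic[OF tilt] harm_f_bounds[OF tilt] harm_f_renewal[OF tilt] by blast
qed

end
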